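(* Let $\theta_1,\dots,\theta_4\in\mathbb{R}$ and $\alpha,\beta\in\mathbb{R}$ with $\alpha^2=\beta^2$ and $\alpha\neq0$. Put $\widehat L=\exp\big(\tfrac12\theta_1\Gamma_{12}+\tfrac12\theta_2\Gamma_{34}+\tfrac12\theta_3\Gamma_{56}+\tfrac12\theta_4\Gamma_{78}+\tfrac12\alpha\Gamma_{0\natural}+\tfrac12\beta\Gamma_{9\natural}\big)\in\mathrm{Spin}_{10,1}$, $\widehat R^2=\prod_{k=1}^4(\cos\theta_k\,\mathbb{1}+\sin\theta_k\,\Gamma_{2k-1,2k})$, $\widehat N=\alpha\Gamma_{0\natural}+\beta\Gamma_{9\natural}$, and $\pi=\Gamma_0\Gamma_1\Gamma_3\Gamma_5\Gamma_7\Gamma_9$ (the Clifford element of the plane $e_0\wedge e_1\wedge e_3\wedge e_5\wedge e_7\wedge e_9$). Then: (i) $\widehat N^2=0$, $\widehat L^2=\widehat R^2(\mathbb{1}+\widehat N)$, and $\dim\ker\widehat N=16$; (ii) a spinor $\varepsilon\in\Delta$ satisfies both $\pi\cdot\varepsilon=\varepsilon$ and $\widehat L\pi\widehat L^{-1}\cdot\varepsilon=\varepsilon$ if and only if $\pi\cdot\varepsilon=\varepsilon$, $\widehat R^2\cdot\varepsilon=\varepsilon$ and $\widehat N\cdot\varepsilon=0$; (iii) the subspace $\Delta_0=\{\varepsilon\in\Delta:\widehat R^2\cdot\varepsilon=\varepsilon\}$ has dimension divisible by $4$, and $\dim\{\varepsilon:\pi\cdot\varepsilon=\varepsilon,\ \widehat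 R^2\cdot\varepsilon=\varepsilon,\ \widehat N\cdot\varepsilon=0\}=\tfrac14\dim\Delta_0=\tfrac12\dim\{\varepsilon:\pi\cdot\varepsilon=\varepsilon,\ \widehat R^2\cdot\varepsilon=\varepsilon\}$.
   Context: Let $\mathbb{M}^{10,1}$ be $\mathbb{R}^{11}$ with orthonormal basis $e_0,e_1,\dots,e_9,e_\natural$ and Lorentzian metric $\eta$ with $\eta(e_0,e_0)=-1$ and $\eta(e_M,e_M)=+1$ for $M\neq 0$. The Clifford algebra $\mathrm{C}\ell_{1,10}$ is generated by $\Gamma_M$, $M\in\{0,1,\dots,9,\natural\}$, with $\Gamma_M\Gamma_N+\Gamma_N\Gamma_M=2\eta_{MN}\mathbb{1}$; $\Gamma_{MN}=\Gamma_M\Gamma_N$ for $M\neq N$. $\Delta$ denotes the $32$-dimensional real irreducible representation of $\mathrm{C}\ell_{1,10}$ on which $\Gamma_0\Gamma_1\cdots\Gamma_9\Gamma_\natural=-\mathbb{1}$. (Physically: two $\mathsf{M}5$-branes with tangent planes $\pi$ and $L\pi$, $L$ the image of $\widehat L$ in $\mathrm{SO}^0_{10,1}$, a rotation in $\mathrm{SO}_8$ composed with a null rotation.) *)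

theory Defs
  imports "HOL-Analysis.Analysis"
begin

text \<open>Index convention: Clifford generators are indexed by nat; indices 0..9 are e_0..e_9 and
  index 10 stands for the eleventh direction (natural sign).\<close>

definition eta :: "nat \<Rightarrow> nat \<Rightarrow> real" where
  "eta M N = (if M \<noteq> N then 0 else if M = 0 then -1 else 1)"

definition matpow :: "real^'n^'n \<Rightarrow> nat \<Rightarrow> real^'n^'n" where
  "matpow A k = ((\<lambda>B. A ** B) ^^ k) (mat 1)"

definition mexp :: "real^'n^'n \<Rightarrow> real^'n^'n" where
  "mexp A = (\<Sum>k. (1 / fact k) *\<^sub>R matpow A k)"

definition clifford_rep :: "(nat \<Rightarrow> real^'n^'n) \<Rightarrow> bool" where
  "clifford_rep G \<longleftrightarrow>
     (\<forall>M<11. \<forall>N<11. G M ** G N + G N ** G M = (2 * eta M N) *\<^sub>R mat 1)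
     \<and> foldr (\<lambda>M P. G M ** P) [0..<11] (mat 1) = - mat 1"

end

theory Submission
  imports Defs
begin

text \<open>
  Put \<open>J\<^sub>k = \<Gamma>\<^sub>2\<^sub>k\<^sub>-\<^sub>1 \<Gamma>\<^sub>2\<^sub>k\<close> and \<open>Y = \<Sum>\<^sub>k \<theta>\<^sub>k J\<^sub>k\<close>. The \<open>J\<^sub>k\<close> are commuting square roots of \<open>-1\<close>
  that commute with \<open>N\<close>, and \<open>N\<^sup>2 = \<alpha>\<^sup>2 - \<beta>\<^sup>2 = 0\<close>; hence \<open>R\<^sup>2 = exp Y\<close> and
  \<open>L\<^sup>2 = exp (Y + N) = R\<^sup>2 (1 + N)\<close>. Since \<open>\<pi>\<close> anticommutes with \<open>Y\<close> and \<open>N\<close>, it conjugates \<open>L\<close>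
  into \<open>L\<^sup>-\<^sup>1\<close>, so \<open>L \<pi> L\<^sup>-\<^sup>1 = L\<^sup>2 \<pi>\<close>. If \<open>\<pi> \<epsilon> = \<epsilon> = L\<^sup>2 \<pi> \<epsilon>\<close>, then \<open>d = N \<epsilon>\<close> satisfies
  \<open>R\<^sup>2 \<epsilon> = \<epsilon> - d\<close> and \<open>R\<^sup>2 d = d\<close>; as \<open>R\<^sup>2\<close> is an isometry of a positive definite form (the
  standard inner product averaged over the \<open>J\<^sub>k\<close>), this forces \<open>d = 0\<close>.

  For the dimensions: \<open>ker N\<close> is the \<open>+1\<close> eigenspace of the involution \<open>K = \<plusminus>\<Gamma>\<^sub>0 \<Gamma>\<^sub>9\<close>, and
  the two eigenspaces of an involution have equal dimension as soon as some invertible operator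
  anticommutes with it. This halves \<open>\<Delta>\<close> along \<open>K\<close> (using \<open>\<Gamma>\<^sub>0\<close>), \<open>\<Delta>\<^sub>0\<close> along \<open>\<pi>\<close> (using \<open>\<Gamma>\<^sub>9\<close>),
  and \<open>\<Delta>\<^sub>0 \<inter> ker (\<pi> - 1)\<close> along \<open>K\<close> (using \<open>\<Gamma>\<^sub>0 \<Gamma>\<^sub>1 \<Gamma>\<^sub>2\<close>); the last two operators commute
  with the \<open>J\<^sub>k\<close>, hence with \<open>R\<^sup>2\<close>.
\<close>

text \<open>The library multiplies elements of \<open>real^'n^'n\<close> componentwise, so to identify \<open>mexp\<close> with
  \<open>exp\<close> matrices are transported to a type of operators that is a Banach algebra under
  composition.\<close>

typedef (overloaded) ('n::finite) endo = "UNIV :: ((real^'n) \<Rightarrow>\<^sub>L (real^'n)) set"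
  by simp

setup_lifting type_definition_endo

instantiation endo :: (finite) real_normed_algebra_1
begin

lift_definition zero_endo :: "'a endo" is 0 .
lift_definition one_endo :: "'a endo" is id_blinfun .
lift_definition plus_endo :: "'a endo \<Rightarrow> 'a endo \<Rightarrow> 'a endo" is "(+)" .
lift_definition minus_endo :: "'a endo \<Rightarrow> 'a endo \<Rightarrow> 'a endo" is "(-)" .
lift_definition uminus_endo :: "'a endo \<Rightarrow> 'a endo" is uminus .
lift_definition times_endo :: "'a endo \<Rightarrow> 'a endo \<Rightarrow> 'a endo" is "(o\<^sub>L)" .
lift_definition scaleR_endo :: "real \<Rightarrow> 'a endo \<Rightarrow> 'a endo" is scaleR .
lift_definition norm_endo :: "'a endo \<Rightarrow> real" is norm .

definition dist_endo :: "'a endo \<Rightarrow> 'a endo \<Rightarrow> real"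
  where "dist_endo a b = norm (a - b)"

definition sgn_endo :: "'a endo \<Rightarrow> 'a endo"
  where "sgn_endo a = inverse (norm a) *\<^sub>R a"

definition uniformity_endo :: "('a endo \<times> 'a endo) filter"
  where "uniformity_endo = (INF e\<in>{0<..}. principal {(a, b). dist a b < e})"

definition open_endo :: "'a endo set \<Rightarrow> bool"
  where "open_endo S = (\<forall>a\<in>S. \<forall>\<^sub>F (a', b) in uniformity. a' = a \<longrightarrow> b \<in> S)"

instance
proof
  fix a b c :: "'a endo" and r s :: real and S :: "'a endo set"
  show "a + b + c = a + (b + c)" "a + b = b + a" "0 + a = a" "- a + a = 0" "a - b = a + - b"
    by (transfer; simp add: algebra_simps)+
  show "r *\<^sub>R (a + b) = r *\<^sub>R a + r *\<^sub>R b" "(r + s) *\<^sub>R a = r *\<^sub>R a + s *\<^sub>R a"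
    "r *\<^sub>R s *\<^sub>R a = (r * s) *\<^sub>R a" "1 *\<^sub>R a = a"
    by (transfer; simp add: algebra_simps)+
  show "a * b * c = a * (b * c)" "1 * a = a" "a * 1 = a"
    by (transfer; auto intro!: blinfun_eqI)+
  show "(a + b) * c = a * c + b * c" "a * (b + c) = a * b + a * c"
    "r *\<^sub>R a * b = r *\<^sub>R (a * b)" "a * r *\<^sub>R b = r *\<^sub>R (a * b)"
    by (transfer; simp add: blinfun.bilinear_simps
          bounded_bilinear.add_left[OF bounded_bilinear_blinfun_compose]
          bounded_bilinear.add_right[OF bounded_bilinear_blinfun_compose]
          bounded_bilinear.scaleR_left[OF bounded_bilinear_blinfun_compose]
          bounded_bilinear.scaleR_right[OF bounded_bilinear_blinfun_compose])+
  show "(0::'a endo) \<noteq> 1"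
  proof transfer
    have "blinfun_apply (0::(real^'a) \<Rightarrow>\<^sub>L (real^'a)) 1 \<noteq> blinfun_apply id_blinfun 1"
      by simp
    then show "(0::(real^'a) \<Rightarrow>\<^sub>L (real^'a)) \<noteq> id_blinfun"
      by metis
  qed
  show "norm (a * b) \<le> norm a * norm b"
    by transfer (rule norm_blinfun_compose)
  show "norm (1::'a endo) = 1" "(norm a = 0) = (a = 0)" "norm (r *\<^sub>R a) = \<bar>r\<bar> * norm a"
    by (transfer; simp)+
  show "norm (a + b) \<le> norm a + norm b"
    by transfer (rule norm_triangle_ineq)
  show "dist a b = norm (a - b)" "sgn a = inverse (norm a) *\<^sub>R a"
    "uniformity = (INF e\<in>{0<..}. principal {(a, b::'a endo). dist a b < e})"
    "open S = (\<forall>a\<in>S. \<forall>\<^sub>F (a', b) in uniformity. a' = a \<longrightarrow> b \<in> S)"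
    by (simp_all add: dist_endo_def sgn_endo_def uniformity_endo_def open_endo_def)
qed

end

instance endo :: (finite) banach
proof
  fix X :: "nat \<Rightarrow> 'a endo"
  assume "Cauchy X"
  then have "Cauchy (\<lambda>k. Rep_endo (X k))"
    unfolding Cauchy_def dist_norm by (simp add: norm_endo.rep_eq minus_endo.rep_eq)
  then obtain l where "(\<lambda>k. Rep_endo (X k)) \<longlonglongrightarrow> l"
    using Cauchy_convergent_iff convergent_def by blast
  then have "X \<longlonglongrightarrow> Abs_endo l"
    unfolding LIMSEQ_def dist_norm by (simp add: norm_endo.rep_eq minus_endo.rep_eq Abs_endo_inverse)
  then show "convergent X"
    by (auto simp: convergent_def)
qed

lift_definition endo_apply :: "'n::finite endo \<Rightarrow> real^'n \<Rightarrow> real^'n" is blinfun_apply .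

lemma endo_apply_mult [simp]: "endo_apply (a * b) v = endo_apply a (endo_apply b v)"
  and endo_apply_one [simp]: "endo_apply 1 v = v"
  and endo_apply_zero [simp]: "endo_apply 0 v = 0"
  and endo_apply_add [simp]: "endo_apply (a + b) v = endo_apply a v + endo_apply b v"
  and endo_apply_diff [simp]: "endo_apply (a - b) v = endo_apply a v - endo_apply b v"
  and endo_apply_uminus [simp]: "endo_apply (- a) v = - endo_apply a v"
  and endo_apply_scaleR [simp]: "endo_apply (r *\<^sub>R a) v = r *\<^sub>R endo_apply a v"
  by (transfer; simp add: blinfun.bilinear_simps)+

lemma endo_apply_vzero [simp]: "endo_apply a 0 = 0"
  and endo_apply_vadd [simp]: "endo_apply a (v + w) = endo_apply a v + endo_apply a w"
  and endo_apply_vdiff [simp]: "endo_apply a (v - w) = endo_apply a v - endo_apply a w"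
  and endo_apply_vuminus [simp]: "endo_apply a (- v) = - endo_apply a v"
  and endo_apply_vscaleR [simp]: "endo_apply a (r *\<^sub>R v) = r *\<^sub>R endo_apply a v"
  by (transfer; simp add: blinfun.bilinear_simps)+

lemma endo_apply_comp: "endo_apply a \<circ> endo_apply b = endo_apply (a * b)"
  by (simp add: fun_eq_iff)

lemma linear_endo_apply: "linear (endo_apply a)"
  by transfer (rule bounded_linear.linear[OF blinfun.bounded_linear_right])

lemma endo_eqI: "(\<And>v. endo_apply a v = endo_apply b v) \<Longrightarrow> a = b"
  by transfer (auto intro: blinfun_eqI)

lemma subspace_fixed_space: "subspace {v. endo_apply a v = v}"
  unfolding subspace_def by simp

lemma endo_apply_commute_fixed:
  "a * b = b * a \<Longrightarrow> endo_apply b v = v \<Longrightarrow> endo_apply b (endo_apply a v) = endo_apply a v"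
  by (metis endo_apply_mult)

lift_definition endo_of_matrix :: "real^'n^'n \<Rightarrow> 'n::finite endo"
  is "\<lambda>A. Blinfun (\<lambda>v. A *v v)" .

lemma endo_apply_endo_of_matrix [simp]: "endo_apply (endo_of_matrix A) v = A *v v"
  by transfer (simp add: bounded_linear_Blinfun_apply linear_conv_bounded_linear)

lemma endo_of_matrix_mult: "endo_of_matrix (A ** B) = endo_of_matrix A * endo_of_matrix B"
  and endo_of_matrix_add: "endo_of_matrix (A + B) = endo_of_matrix A + endo_of_matrix B"
  and endo_of_matrix_scaleR: "endo_of_matrix (r *\<^sub>R A) = r *\<^sub>R endo_of_matrix A"
  and endo_of_matrix_one: "endo_of_matrix (mat 1) = 1"
  and endo_of_matrix_zero: "endo_of_matrix 0 = 0"
  by (rule endo_eqI;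
      simp add: matrix_vector_mul_assoc matrix_vector_mult_add_rdistrib scaleR_matrix_vector_assoc)+

lemmas endo_of_matrix_simps =
  endo_of_matrix_mult endo_of_matrix_add endo_of_matrix_scaleR endo_of_matrix_one endo_of_matrix_zero

lemma endo_of_matrix_inject: "endo_of_matrix A = endo_of_matrix B \<longleftrightarrow> A = B"
  by (metis endo_apply_endo_of_matrix matrix_eq)

definition matrix_of_endo :: "'n::finite endo \<Rightarrow> real^'n^'n"
  where "matrix_of_endo a = matrix (endo_apply a)"

lemma endo_of_matrix_of_endo [simp]: "endo_of_matrix (matrix_of_endo a) = a"
  by (rule endo_eqI) (simp add: matrix_of_endo_def matrix_works linear_endo_apply)

lemma matrix_of_endo_eq_iff: "matrix_of_endo a = A \<longleftrightarrow> a = endo_of_matrix A"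
  using endo_of_matrix_inject endo_of_matrix_of_endo by metis

lemma linear_endo_of_matrix: "linear endo_of_matrix"
  by (rule linearI) (simp_all add: endo_of_matrix_add endo_of_matrix_scaleR)

lemma endo_of_matrix_matpow: "endo_of_matrix (matpow A k) = endo_of_matrix A ^ k"
  by (induction k) (simp_all add: matpow_def endo_of_matrix_one endo_of_matrix_mult)

lemma tendsto_matrix_of_endo:
  fixes f :: "'b \<Rightarrow> 'n::finite endo"
  assumes "(f \<longlongrightarrow> a) F"
  shows "((\<lambda>x. matrix_of_endo (f x)) \<longlongrightarrow> matrix_of_endo a) F"
proof -
  have "bounded_linear (\<lambda>a :: 'n endo. endo_apply a v)" for v
  proof (rule bounded_linear_intro[where K = "norm v"])
    show "norm (endo_apply a v) \<le> norm a * norm v" for a :: "'n endo"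
      by transfer (rule norm_blinfun)
  qed simp_all
  then have "((\<lambda>x. endo_apply (f x) v) \<longlongrightarrow> endo_apply a v) F" for v
    by (rule bounded_linear.tendsto) (rule assms)
  then show ?thesis
    unfolding matrix_of_endo_def matrix_def by (intro vec_tendstoI) (simp add: tendsto_vec_nth)
qed

lemma endo_of_matrix_mexp: "endo_of_matrix (mexp A) = exp (endo_of_matrix A)"
proof -
  let ?a = "endo_of_matrix A"
  have "(\<lambda>n. matrix_of_endo (\<Sum>k<n. ?a ^ k /\<^sub>R fact k)) \<longlonglongrightarrow> matrix_of_endo (exp ?a)"
    using exp_converges[of ?a] unfolding sums_def by (rule tendsto_matrix_of_endo)
  moreover have "matrix_of_endo (\<Sum>k<n. ?a ^ k /\<^sub>R fact k) = (\<Sum>k<n. (1 / fact k) *\<^sub>R matpow A k)" for n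
    by (simp add: matrix_of_endo_eq_iff linear_sum[OF linear_endo_of_matrix]
        linear_scale[OF linear_endo_of_matrix] endo_of_matrix_matpow divide_inverse_commute)
  ultimately have "(\<lambda>k. (1 / fact k) *\<^sub>R matpow A k) sums matrix_of_endo (exp ?a)"
    unfolding sums_def by simp
  then show ?thesis
    unfolding mexp_def by (simp add: sums_unique[symmetric])
qed

lemma matrix_inv_eqI:
  fixes A B :: "'a::semiring_1^'n^'n"
  assumes "A ** B = mat 1" and "B ** A = mat 1"
  shows "matrix_inv A = B"
proof -
  have inv: "A ** matrix_inv A = mat 1 \<and> matrix_inv A ** A = mat 1"
    unfolding matrix_inv_def by (rule someI[of _ B]) (use assms in simp)
  have "matrix_inv A = matrix_inv A ** (A ** B)"
    by (simp add: assms(1))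
  also have "\<dots> = B"
    by (simp add: matrix_mul_assoc inv)
  finally show ?thesis .
qed

lemma exp_intertwine:
  fixes a x y :: "'a::{real_normed_algebra_1,banach}"
  assumes "a * x = y * a"
  shows "a * exp x = exp y * a"
proof -
  have power: "a * x ^ k = y ^ k * a" for k
  proof (induction k)
    case (Suc k)
    have "a * x ^ Suc k = y * (a * x ^ k)"
      by (simp add: assms flip: mult.assoc)
    then show ?case
      by (simp add: Suc.IH mult.assoc)
  qed simp
  have "a * exp x = (\<Sum>k. a * (x ^ k /\<^sub>R fact k))"
    unfolding exp_def by (rule suminf_mult[symmetric]) (rule summable_exp_generic)
  also have "\<dots> = (\<Sum>k. (y ^ k /\<^sub>R fact k) * a)"
    by (simp add: power)
  also have "\<dots> = exp y * a"
    unfolding exp_def by (rule suminf_mult2[symmetric]) (rule summable_exp_generic)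
  finally show ?thesis .
qed

lemma exp_square_zero:
  fixes n :: "'a::{real_normed_algebra_1,banach}"
  assumes "n * n = 0"
  shows "exp n = 1 + n"
proof -
  have "n ^ k = 0" if "2 \<le> k" for k
    using that by (induction k rule: nat_induct_at_least) (simp_all add: power2_eq_square assms)
  then have "exp n = (\<Sum>k<2. n ^ k /\<^sub>R fact k)"
    unfolding exp_def by (intro suminf_finite) auto
  then show ?thesis
    by (simp add: numeral_2_eq_2)
qed

lemma exp_bounded_algebra_hom:
  fixes f :: "'a::{real_normed_algebra_1,banach} \<Rightarrow> 'b::{real_normed_algebra_1,banach}"
  assumes "bounded_linear f" and "\<And>x y. f (x * y) = f x * f y" and "f 1 = 1"
  shows "exp (f x) = f (exp x)"
proof -
  have "f (x ^ k) = f x ^ k" for k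
    by (induction k) (simp_all add: assms(2,3))
  then have "(\<lambda>k. f x ^ k /\<^sub>R fact k) sums f (exp x)"
    using bounded_linear.sums[OF assms(1) exp_converges[of x]]
    by (simp add: linear_scale[OF bounded_linear.linear[OF assms(1)]])
  then show ?thesis
    using exp_converges sums_unique2 by blast
qed

text \<open>The real span of \<open>1\<close> and a square root \<open>J\<close> of \<open>-1\<close> is a copy of \<open>\<complex>\<close>.\<close>

lemma exp_scaleR_complex_structure:
  fixes J :: "'a::{real_normed_algebra_1,banach}"
  assumes "J * J = -1"
  shows "exp (t *\<^sub>R J) = cos t *\<^sub>R 1 + sin t *\<^sub>R J"
proof -
  define f where "f z = Re z *\<^sub>R 1 + Im z *\<^sub>R J" for z :: complex
  have "bounded_linear f"
    unfolding f_def
    by (intro bounded_linear_add bounded_linear_compose[OF bounded_linear_scaleR_left]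
        bounded_linear_Re bounded_linear_Im)
  moreover have "f (z * w) = f z * f w" for z w
    by (simp add: f_def algebra_simps assms)
  moreover have "f 1 = 1"
    by (simp add: f_def)
  ultimately have "exp (f (\<i> * complex_of_real t)) = f (exp (\<i> * complex_of_real t))"
    by (rule exp_bounded_algebra_hom)
  then show ?thesis
    by (simp add: f_def flip: cis_conv_exp)
qed

section \<open>Forms preserved by complex structures\<close>

definition positive_definite_form :: "('v::real_vector \<Rightarrow> 'v \<Rightarrow> real) \<Rightarrow> bool"
  where "positive_definite_form B \<longleftrightarrow>
    bilinear B \<and> (\<forall>v w. B v w = B w v) \<and> (\<forall>v. v \<noteq> 0 \<longrightarrow> 0 < B v v)"

definition preserves_form :: "('v \<Rightarrow> 'v \<Rightarrow> real) \<Rightarrow> ('v \<Rightarrow> 'v) \<Rightarrow> bool"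
  where "preserves_form B T \<longleftrightarrow> (\<forall>v w. B (T v) (T w) = B v w)"

definition average_form :: "('v \<Rightarrow> 'v \<Rightarrow> real) \<Rightarrow> ('v \<Rightarrow> 'v) \<Rightarrow> 'v \<Rightarrow> 'v \<Rightarrow> real"
  where "average_form B J v w = B v w + B (J v) (J w)"

lemma positive_definite_form_inner: "positive_definite_form (inner :: 'a::real_inner \<Rightarrow> 'a \<Rightarrow> real)"
  by (simp add: positive_definite_form_def bilinear_def linear_iff inner_add inner_commute)

lemma positive_definite_form_average:
  assumes "positive_definite_form B" and "linear J"
  shows "positive_definite_form (average_form B J)"
proof -
  have nonneg: "0 \<le> B u u" for u
    using assms(1) unfolding positive_definite_form_def
    by (cases "u = 0") (auto simp: bilinear_lzero less_imp_le)
  have "bilinear (\<lambda>v w. B (J v) (J w))"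
    using assms unfolding positive_definite_form_def bilinear_def
    by (auto intro: linear_compose[of J, unfolded o_def])
  moreover have "0 < B v v + B (J v) (J v)" if "v \<noteq> 0" for v
    using assms(1) that nonneg[of "J v"] unfolding positive_definite_form_def
    by (simp add: add_pos_nonneg)
  ultimately show ?thesis
    using assms unfolding positive_definite_form_def average_form_def bilinear_def
    by (auto intro: linear_compose_add)
qed

lemma preserves_average_form_self:
  assumes "bilinear B" and "\<And>v. J (J v) = - v"
  shows "preserves_form (average_form B J) J"
  using assms by (simp add: preserves_form_def average_form_def bilinear_lneg bilinear_rneg)

lemma preserves_average_form:
  assumes "preserves_form B T" and "\<And>v. T (J v) = J (T v)"
  shows "preserves_form (average_form B J) T"
  using assms by (simp add: preserves_form_def average_form_def flip: assms(2))

lemma commuting_complex_structures_preserve_form: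
  fixes Js :: "('v::real_inner \<Rightarrow> 'v) list"
  assumes "\<And>J. J \<in> set Js \<Longrightarrow> linear J \<and> (\<forall>v. J (J v) = - v)"
    and "\<And>J J'. J \<in> set Js \<Longrightarrow> J' \<in> set Js \<Longrightarrow> J \<circ> J' = J' \<circ> J"
  obtains B where "positive_definite_form B" and "\<And>J. J \<in> set Js \<Longrightarrow> preserves_form B J"
  using assms
proof (induction Js arbitrary: thesis)
  case Nil
  show ?case
    by (rule Nil.prems(1)[OF positive_definite_form_inner]) simp
next
  case (Cons J Js)
  obtain B where B: "positive_definite_form B" "\<And>J'. J' \<in> set Js \<Longrightarrow> preserves_form B J'"
    by (rule Cons.IH) (use Cons.prems(2,3) in auto)
  have J: "linear J" "\<And>v. J (J v) = - v"
    using Cons.prems(2) by auto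
  show ?case
  proof (rule Cons.prems(1))
    show "positive_definite_form (average_form B J)"
      using B(1) J(1) by (rule positive_definite_form_average)
    fix J' assume "J' \<in> set (J # Js)"
    then consider "J' = J" | "J' \<in> set Js"
      by auto
    then show "preserves_form (average_form B J) J'"
    proof cases
      case 1
      then show ?thesis
        using B(1) J(2) by (simp add: positive_definite_form_def preserves_average_form_self)
    next
      case 2
      then have "J' (J v) = J (J' v)" for v
        using Cons.prems(3)[of J' J] by (simp add: fun_eq_iff)
      then show ?thesis
        by (rule preserves_average_form[OF B(2)[OF 2]])
    qed
  qed
qed

lemma preserves_form_comp:
  "preserves_form B S \<Longrightarrow> preserves_form B T \<Longrightarrow> preserves_form B (S \<circ> T)"
  by (simp add: preserves_form_def)

lemma preserves_form_rotation:
  assumes "bilinear B" and J: "\<And>v. J (J v) = - v" "preserves_form B J"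
  shows "preserves_form B (\<lambda>v. cos t *\<^sub>R v + sin t *\<^sub>R J v)"
proof -
  have isometry: "B (J v) (J w) = B v w" for v w
    using J(2) by (simp add: preserves_form_def)
  have skew: "B (J v) w + B v (J w) = 0" for v w
    using isometry[of v "J w"] by (simp add: J(1) assms(1) bilinear_rneg)
  have "B (cos t *\<^sub>R v + sin t *\<^sub>R J v) (cos t *\<^sub>R w + sin t *\<^sub>R J w)
      = (cos t * cos t + sin t * sin t) * B v w + cos t * sin t * (B (J v) w + B v (J w))" for v w
    by (simp add: assms(1) bilinear_ladd bilinear_radd bilinear_lmul bilinear_rmul isometry
        algebra_simps del: sin_cos_squared_add3)
  then show ?thesis
    by (simp add: preserves_form_def skew)
qed

lemma preserves_form_shear_eq_0:
  assumes "positive_definite_form B" and "preserves_form B T" and "T e = e - d" and "T d = d"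
  shows "d = 0"
proof -
  have "bilinear B"
    using assms(1) by (simp add: positive_definite_form_def)
  have "B e d = B (T e) (T d)"
    using assms(2) by (simp add: preserves_form_def)
  then have "B d d = 0"
    by (simp add: assms(3,4) \<open>bilinear B\<close> bilinear_lsub)
  then show ?thesis
    using assms(1) unfolding positive_definite_form_def by force
qed

section \<open>Halving dimensions\<close>

lemma dim_eigenspaces_involution:
  fixes K :: "'a::euclidean_space \<Rightarrow> 'a"
  assumes V: "subspace V" and K: "linear K" "K ` V \<subseteq> V" "\<And>v. K (K v) = v"
  shows "dim {v \<in> V. K v = v} + dim {v \<in> V. K v = - v} = dim V"
proof -
  define Vp where "Vp = {v \<in> V. K v = v}"
  define Vm where "Vm = {v \<in> V. K v = - v}"
  have subspaces: "subspace Vp" "subspace Vm"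
    using V K(1) unfolding Vp_def Vm_def subspace_def by (auto simp: linear_add linear_scale linear_0)
  have "dim (Vp \<inter> Vm) = 0"
    unfolding Vp_def Vm_def by (auto simp: neg_eq_iff_add_eq_0 simp flip: scaleR_2)
  moreover have "{x + y |x y. x \<in> Vp \<and> y \<in> Vm} = V"
  proof (intro equalityI subsetI)
    fix v assume "v \<in> {x + y |x y. x \<in> Vp \<and> y \<in> Vm}"
    then show "v \<in> V"
      unfolding Vp_def Vm_def using V subspace_add by blast
  next
    fix v assume v: "v \<in> V"
    have "(1/2) *\<^sub>R (v + K v) \<in> Vp" "(1/2) *\<^sub>R (v - K v) \<in> Vm"
      unfolding Vp_def Vm_def using v K V
      by (auto simp: linear_add linear_diff linear_scale subspace_add subspace_diff subspace_scale)
    moreover have "v = (1/2) *\<^sub>R (v + K v) + (1/2) *\<^sub>R (v - K v)"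
      by (simp add: algebra_simps flip: scaleR_2)
    ultimately show "v \<in> {x + y |x y. x \<in> Vp \<and> y \<in> Vm}"
      by blast
  qed
  ultimately show ?thesis
    using dim_sums_Int[OF subspaces] unfolding Vp_def Vm_def by (simp del: dim_eq_0)
qed

text \<open>An invertible operator anticommuting with the involution swaps its two eigenspaces.\<close>

lemma dim_fixed_space_half:
  fixes K A :: "'a::euclidean_space \<Rightarrow> 'a"
  assumes V: "subspace V"
    and K: "linear K" "K ` V \<subseteq> V" "\<And>v. K (K v) = v"
    and A: "linear A" "A ` V \<subseteq> V" "\<And>v. A (A v) = c *\<^sub>R v" "c \<noteq> 0"
    and anticomm: "\<And>v. A (K v) = - K (A v)"
  shows "2 * dim {v \<in> V. K v = v} = dim V"
proof -
  define Vp where "Vp = {v \<in> V. K v = v}"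
  define Vm where "Vm = {v \<in> V. K v = - v}"
  have KA: "K (A v) = - A (K v)" for v
    by (simp add: anticomm)
  have "inj_on A S" for S
    by (rule inj_onI) (metis A(3,4) scaleR_cancel_left)
  then have "dim (A ` S) = dim S" for S
    using A(1) by (rule dim_image_eq[rotated])
  moreover have "A ` Vp \<subseteq> Vm" "A ` Vm \<subseteq> Vp"
    unfolding Vp_def Vm_def using A(2) by (auto simp: KA linear_neg[OF A(1)])
  ultimately have "dim Vp = dim Vm"
    by (metis dim_subset le_antisym)
  then show ?thesis
    using dim_eigenspaces_involution[OF V K] unfolding Vp_def Vm_def by simp
qed

locale clifford_generators =
  fixes g :: "nat \<Rightarrow> 'a::real_algebra_1"
  assumes anticommute: "i < 11 \<Longrightarrow> j < 11 \<Longrightarrow> i \<noteq> j \<Longrightarrow> g i * g j = - (g j * g i)"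
    and timelike_square: "g 0 * g 0 = -1"
    and spacelike_square: "0 < i \<Longrightarrow> i < 11 \<Longrightarrow> g i * g i = 1"
begin

lemma swap: "j < i \<Longrightarrow> i < 11 \<Longrightarrow> g i * g j = - (g j * g i)"
  by (rule anticommute) auto

lemma swap_left: "j < i \<Longrightarrow> i < 11 \<Longrightarrow> g i * (g j * x) = - (g j * (g i * x))"
  by (simp add: swap flip: mult.assoc)

lemma timelike_square_left: "g 0 * (g 0 * x) = - x"
  by (simp add: timelike_square flip: mult.assoc)

lemma spacelike_square_left: "0 < i \<Longrightarrow> i < 11 \<Longrightarrow> g i * (g i * x) = x"
  by (simp add: spacelike_square flip: mult.assoc)

text \<open>Rewriting with \<open>word_simps\<close> sorts every product of generators into increasing order
  of indices and cancels squares, so it decides equalities between such words.\<close>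

lemmas word_simps = mult.assoc swap swap_left timelike_square timelike_square_left
  spacelike_square spacelike_square_left

definition "J1 = g 1 * g 2"
definition "J2 = g 3 * g 4"
definition "J3 = g 5 * g 6"
definition "J4 = g 7 * g 8"
definition "plane = g 0 * g 1 * g 3 * g 5 * g 7 * g 9"
definition "gamma_0n = g 0 * g 10"
definition "gamma_9n = g 9 * g 10"
definition "gamma_09 = g 0 * g 9"
definition "gamma_012 = g 0 * g 1 * g 2"

lemmas word_defs = J1_def J2_def J3_def J4_def plane_def gamma_0n_def gamma_9n_def gamma_09_def
  gamma_012_def

lemma J_square: "J1 * J1 = -1" "J2 * J2 = -1" "J3 * J3 = -1" "J4 * J4 = -1"
  by (simp_all add: word_defs word_simps)

lemma J_commute:
  "J2 * J1 = J1 * J2" "J3 * J1 = J1 * J3" "J4 * J1 = J1 * J4"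
  "J3 * J2 = J2 * J3" "J4 * J2 = J2 * J4" "J4 * J3 = J3 * J4"
  by (simp_all add: word_defs word_simps)

lemma J_commute_null:
  "gamma_0n * J1 = J1 * gamma_0n" "gamma_0n * J2 = J2 * gamma_0n"
  "gamma_0n * J3 = J3 * gamma_0n" "gamma_0n * J4 = J4 * gamma_0n"
  "gamma_9n * J1 = J1 * gamma_9n" "gamma_9n * J2 = J2 * gamma_9n"
  "gamma_9n * J3 = J3 * gamma_9n" "gamma_9n * J4 = J4 * gamma_9n"
  by (simp_all add: word_defs word_simps)

lemma null_squares:
  "gamma_0n * gamma_0n = 1" "gamma_9n * gamma_9n = -1" "gamma_9n * gamma_0n = - (gamma_0n * gamma_9n)"
  by (simp_all add: word_defs word_simps)

lemma plane_anticommute: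
  "plane * J1 = - (J1 * plane)" "plane * J2 = - (J2 * plane)"
  "plane * J3 = - (J3 * plane)" "plane * J4 = - (J4 * plane)"
  "plane * gamma_0n = - (gamma_0n * plane)" "plane * gamma_9n = - (gamma_9n * plane)"
  by (simp_all add: word_defs word_simps)

lemma plane_square: "plane * plane = 1"
  by (simp add: word_defs word_simps)

lemma g9_relations:
  "g 9 * J1 = J1 * g 9" "g 9 * J2 = J2 * g 9" "g 9 * J3 = J3 * g 9" "g 9 * J4 = J4 * g 9"
  "g 9 * plane = - (plane * g 9)" "g 9 * g 9 = 1"
  by (simp_all add: word_defs word_simps)

lemma gamma_09_relations:
  "gamma_09 * J1 = J1 * gamma_09" "gamma_09 * J2 = J2 * gamma_09"
  "gamma_09 * J3 = J3 * gamma_09" "gamma_09 * J4 = J4 * gamma_09"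
  "gamma_09 * plane = plane * gamma_09" "gamma_09 * gamma_09 = 1"
  "g 0 * gamma_09 = - (gamma_09 * g 0)" "gamma_0n * gamma_09 = - gamma_9n"
  by (simp_all add: word_defs word_simps)

lemma gamma_012_relations:
  "gamma_012 * J1 = J1 * gamma_012" "gamma_012 * J2 = J2 * gamma_012"
  "gamma_012 * J3 = J3 * gamma_012" "gamma_012 * J4 = J4 * gamma_012"
  "gamma_012 * plane = plane * gamma_012" "gamma_012 * gamma_09 = - (gamma_09 * gamma_012)"
  "gamma_012 * gamma_012 = 1"
  by (simp_all add: word_defs word_simps)

end

lemma clifford_rep_generators:
  assumes "clifford_rep G"
  shows "clifford_generators (\<lambda>i. endo_of_matrix (G i))"
proof
  let ?g = "\<lambda>i. endo_of_matrix (G i)"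
  have relation: "?g i * ?g j + ?g j * ?g i = (2 * eta i j) *\<^sub>R 1" if "i < 11" "j < 11" for i j
  proof -
    have "G i ** G j + G j ** G i = (2 * eta i j) *\<^sub>R mat 1"
      using assms that by (simp add: clifford_rep_def)
    then show ?thesis
      by (metis endo_of_matrix_add endo_of_matrix_mult endo_of_matrix_scaleR endo_of_matrix_one)
  qed
  have square: "?g i * ?g i = eta i i *\<^sub>R 1" if "i < 11" for i
  proof -
    have "(2::real) *\<^sub>R (?g i * ?g i) = (2 * eta i i) *\<^sub>R 1"
      using relation[OF that that] by (simp flip: scaleR_2)
    also have "\<dots> = 2 *\<^sub>R (eta i i *\<^sub>R 1)"
      by simp
    finally show ?thesis
      by (simp only: scaleR_cancel_left) simp
  qed
  show "?g i * ?g j = - (?g j * ?g i)" if "i < 11" "j < 11" "i \<noteq> j" for i j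
    using relation[OF that(1,2)] that(3) by (simp add: eta_def eq_neg_iff_add_eq_0)
  show "?g 0 * ?g 0 = -1"
    using square[of 0] by (simp add: eta_def)
  show "?g i * ?g i = 1" if "0 < i" "i < 11" for i
    using square[OF that(2)] that(1) by (simp add: eta_def)
qed

section \<open>The spin lift\<close>

locale spin_lift = clifford_generators g for g :: "nat \<Rightarrow> 'a::{real_normed_algebra_1,banach}" +
  fixes \<theta>1 \<theta>2 \<theta>3 \<theta>4 \<alpha> \<beta> :: real
  assumes null: "\<alpha>\<^sup>2 = \<beta>\<^sup>2" and nonzero: "\<alpha> \<noteq> 0"
begin

definition "Y = \<theta>1 *\<^sub>R J1 + \<theta>2 *\<^sub>R J2 + \<theta>3 *\<^sub>R J3 + \<theta>4 *\<^sub>R J4"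

definition "R2 = (cos \<theta>1 *\<^sub>R 1 + sin \<theta>1 *\<^sub>R J1) * (cos \<theta>2 *\<^sub>R 1 + sin \<theta>2 *\<^sub>R J2)
  * (cos \<theta>3 *\<^sub>R 1 + sin \<theta>3 *\<^sub>R J3) * (cos \<theta>4 *\<^sub>R 1 + sin \<theta>4 *\<^sub>R J4)"

definition "N = \<alpha> *\<^sub>R gamma_0n + \<beta> *\<^sub>R gamma_9n"

definition "X = (\<theta>1/2) *\<^sub>R J1 + (\<theta>2/2) *\<^sub>R J2 + (\<theta>3/2) *\<^sub>R J3 + (\<theta>4/2) *\<^sub>R J4
  + (\<alpha>/2) *\<^sub>R gamma_0n + (\<beta>/2) *\<^sub>R gamma_9n"

definition "L = exp X"

lemma R2_eq_exp: "R2 = exp Y"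
proof -
  have "exp Y = exp (\<theta>1 *\<^sub>R J1) * exp (\<theta>2 *\<^sub>R J2) * exp (\<theta>3 *\<^sub>R J3) * exp (\<theta>4 *\<^sub>R J4)"
    unfolding Y_def
    by (subst exp_add_commuting; simp add: algebra_simps J_commute)+
  then show ?thesis
    by (simp add: R2_def exp_scaleR_complex_structure J_square)
qed

lemma N_square: "N * N = 0"
proof -
  have "N * N = (\<alpha>\<^sup>2 - \<beta>\<^sup>2) *\<^sub>R 1"
    by (simp add: N_def algebra_simps null_squares power2_eq_square)
  then show ?thesis
    by (simp add: null)
qed

lemma X_eq: "X = (1/2) *\<^sub>R (Y + N)"
  by (simp add: X_def Y_def N_def algebra_simps)

lemma L_square: "L * L = R2 * (1 + N)"
proof -
  have "Y * N = N * Y"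
    by (simp add: Y_def N_def algebra_simps J_commute_null)
  then have "exp (Y + N) = R2 * (1 + N)"
    by (simp add: exp_add_commuting R2_eq_exp exp_square_zero N_square)
  moreover have "X + X = Y + N"
    by (simp add: X_eq flip: scaleR_add_left)
  ultimately show ?thesis
    by (simp add: L_def flip: exp_add_commuting)
qed

lemma L_inverse: "L * exp (- X) = 1" "exp (- X) * L = 1"
  using exp_minus_inverse[of X] exp_minus_inverse[of "- X"] by (simp_all add: L_def)

lemma plane_anticommute_Y: "plane * Y = - Y * plane"
  by (simp add: Y_def algebra_simps plane_anticommute)

lemma plane_anticommute_N: "plane * N = - N * plane"
  by (simp add: N_def algebra_simps plane_anticommute)

lemma L_conj_plane: "L * plane * exp (- X) = R2 * (1 + N) * plane"
proof -
  have "plane * - X = X * plane"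
    by (simp add: X_eq algebra_simps plane_anticommute_Y plane_anticommute_N)
  then have "plane * exp (- X) = L * plane"
    unfolding L_def by (rule exp_intertwine)
  then have "L * plane * exp (- X) = (L * L) * plane"
    by (simp add: mult.assoc)
  then show ?thesis
    by (simp add: L_square)
qed

lemma plane_R2: "plane * R2 = exp (- Y) * plane"
  unfolding R2_eq_exp by (rule exp_intertwine) (simp add: plane_anticommute_Y)

lemma R2_plane: "R2 * plane = plane * exp (- Y)"
  unfolding R2_eq_exp by (rule exp_intertwine[symmetric]) (simp add: plane_anticommute_Y)

lemma R2_inverse: "R2 * exp (- Y) = 1" "exp (- Y) * R2 = 1"
  using exp_minus_inverse[of Y] exp_minus_inverse[of "- Y"] by (simp_all add: R2_eq_exp)

lemma commute_R2:
  assumes "x * J1 = J1 * x" "x * J2 = J2 * x" "x * J3 = J3 * x" "x * J4 = J4 * x"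
  shows "x * R2 = R2 * x"
  unfolding R2_eq_exp by (rule exp_intertwine) (simp add: Y_def algebra_simps assms)

definition "\<sigma> = \<beta> / \<alpha>"

lemma sigma_square: "\<sigma> * \<sigma> = 1"
  using null nonzero by (cases "\<beta> = 0") (simp_all add: \<sigma>_def power2_eq_square field_simps)

definition "K = \<sigma> *\<^sub>R gamma_09"

lemma K_relations:
  "K * J1 = J1 * K" "K * J2 = J2 * K" "K * J3 = J3 * K" "K * J4 = J4 * K"
  "K * plane = plane * K" "K * K = 1" "g 0 * K = - (K * g 0)" "gamma_012 * K = - (K * gamma_012)"
  by (simp_all add: K_def gamma_09_relations gamma_012_relations sigma_square)

text \<open>Since \<open>\<beta> = \<sigma> \<alpha>\<close> with \<open>\<sigma> = \<plusminus>1\<close>, the kernel of \<open>N\<close> is the \<open>+1\<close> eigenspace of the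
  involution \<open>K = \<sigma> \<Gamma>\<^sub>0\<^sub>9\<close>.\<close>

lemma N_factor: "N = (- \<alpha>) *\<^sub>R (gamma_0n * (K - 1))"
  using nonzero by (simp add: N_def K_def \<sigma>_def algebra_simps gamma_09_relations)

end

locale spin_lift_rep = spin_lift g \<theta>1 \<theta>2 \<theta>3 \<theta>4 \<alpha> \<beta>
  for g :: "nat \<Rightarrow> 'n::finite endo" and \<theta>1 \<theta>2 \<theta>3 \<theta>4 \<alpha> \<beta>
begin

lemma kernel_N_iff: "endo_apply N v = 0 \<longleftrightarrow> endo_apply K v = v"
proof -
  have "endo_apply gamma_0n (endo_apply gamma_0n w) = w" for w
    by (simp add: null_squares flip: endo_apply_mult)
  then have injective: "endo_apply gamma_0n w = 0 \<Longrightarrow> w = 0" for w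
    by (metis endo_apply_vzero)
  have "endo_apply N v = (- \<alpha>) *\<^sub>R endo_apply gamma_0n (endo_apply K v - v)"
    by (simp add: N_factor)
  then show ?thesis
    using nonzero injective[of "endo_apply K v - v"] by (auto simp del: endo_apply_vdiff)
qed

lemma dim_kernel_N: "2 * dim {v. endo_apply N v = 0} = CARD('n)"
proof -
  have "2 * dim {v \<in> UNIV. endo_apply K v = v} = dim (UNIV :: (real^'n) set)"
    by (rule dim_fixed_space_half[where A = "endo_apply (g 0)" and c = "-1"])
      (simp_all add: linear_endo_apply K_relations timelike_square flip: endo_apply_mult)
  then show ?thesis
    by (simp add: kernel_N_iff)
qed

lemma R2_preserves_positive_definite_form:
  obtains B where "positive_definite_form B" and "preserves_form B (endo_apply R2)"
proof -
  obtain B where B: "positive_definite_form B"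
    and preserves_J: "\<And>J. J \<in> set (map endo_apply [J1, J2, J3, J4]) \<Longrightarrow> preserves_form B J"
  proof (rule commuting_complex_structures_preserve_form)
    show "linear J \<and> (\<forall>v. J (J v) = - v)" if "J \<in> set (map endo_apply [J1, J2, J3, J4])" for J
      using that by (auto simp: linear_endo_apply J_square simp flip: endo_apply_mult)
    show "J \<circ> J' = J' \<circ> J"
      if "J \<in> set (map endo_apply [J1, J2, J3, J4])" "J' \<in> set (map endo_apply [J1, J2, J3, J4])"
      for J J'
      using that by (auto simp: endo_apply_comp J_commute)
  qed (rule that)
  have rotation: "preserves_form B (endo_apply (cos t *\<^sub>R 1 + sin t *\<^sub>R J))"
    if "J * J = -1" and "preserves_form B (endo_apply J)" for t J
  proof -
    have "endo_apply J (endo_apply J v) = - v" for v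
      by (simp add: that(1) flip: endo_apply_mult)
    then have "preserves_form B (\<lambda>v. cos t *\<^sub>R v + sin t *\<^sub>R endo_apply J v)"
      using B that(2) by (simp add: positive_definite_form_def preserves_form_rotation)
    moreover have "endo_apply (cos t *\<^sub>R 1 + sin t *\<^sub>R J) = (\<lambda>v. cos t *\<^sub>R v + sin t *\<^sub>R endo_apply J v)"
      by (simp add: fun_eq_iff)
    ultimately show ?thesis
      by simp
  qed
  have "preserves_form B (endo_apply R2)"
    unfolding R2_def endo_apply_comp[symmetric]
    by (intro preserves_form_comp rotation) (simp_all add: J_square preserves_J)
  with B show ?thesis
    by (rule that)
qed

lemma fixed_by_conj_plane_iff:
  "endo_apply plane e = e \<and> endo_apply (L * plane * exp (- X)) e = e
    \<longleftrightarrow> endo_apply plane e = e \<and> endo_apply R2 e = e \<and> endo_apply N e = 0"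
proof (intro iffI)
  assume "endo_apply plane e = e \<and> endo_apply R2 e = e \<and> endo_apply N e = 0"
  then show "endo_apply plane e = e \<and> endo_apply (L * plane * exp (- X)) e = e"
    by (simp add: L_conj_plane)
next
  assume fixed: "endo_apply plane e = e \<and> endo_apply (L * plane * exp (- X)) e = e"
  then have plane_e: "endo_apply plane e = e"
    by simp
  define d where "d = endo_apply N e"
  have "endo_apply (R2 * (1 + N) * plane) e = e"
    using fixed by (simp only: L_conj_plane)
  then have R2_sum: "endo_apply R2 (e + d) = e"
    by (simp add: plane_e d_def)
  have "endo_apply plane d = endo_apply (plane * N) e"
    by (simp add: d_def)
  then have plane_d: "endo_apply plane d = - d"
    by (simp add: plane_anticommute_N plane_e d_def)
  have "endo_apply (exp (- Y)) (e - d) = endo_apply (exp (- Y) * plane) (e + d)"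
    by (simp add: plane_e plane_d)
  also have "\<dots> = endo_apply plane (endo_apply R2 (e + d))"
    by (simp only: endo_apply_mult flip: plane_R2)
  also have "\<dots> = e"
    by (simp only: R2_sum plane_e)
  finally have "endo_apply (R2 * exp (- Y)) (e - d) = endo_apply R2 e"
    by (simp only: endo_apply_mult)
  then have R2_e: "endo_apply R2 e = e - d"
    by (simp add: R2_inverse)
  then have R2_d: "endo_apply R2 d = d"
    using R2_sum by simp
  obtain B where "positive_definite_form B" and "preserves_form B (endo_apply R2)"
    by (rule R2_preserves_positive_definite_form)
  then have "d = 0"
    using R2_e R2_d by (rule preserves_form_shear_eq_0)
  then show "endo_apply plane e = e \<and> endo_apply R2 e = e \<and> endo_apply N e = 0"
    using plane_e R2_e by (simp add: d_def)
qed

lemma dim_fixed_R2: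
  "dim {v. endo_apply R2 v = v} = 2 * dim {v. endo_apply plane v = v \<and> endo_apply R2 v = v}"
proof -
  let ?V = "{v. endo_apply R2 v = v}"
  have "2 * dim {v \<in> ?V. endo_apply plane v = v} = dim ?V"
  proof (rule dim_fixed_space_half[where A = "endo_apply (g 9)" and c = 1])
    show "endo_apply plane ` ?V \<subseteq> ?V"
    proof clarify
      fix v assume R2_v: "endo_apply R2 v = v"
      then have "endo_apply (exp (- Y)) v = v"
        by (metis R2_inverse(2) endo_apply_mult endo_apply_one)
      then show "endo_apply R2 (endo_apply plane v) = endo_apply plane v"
        by (metis R2_plane endo_apply_mult)
    qed
    show "endo_apply (g 9) ` ?V \<subseteq> ?V"
      using endo_apply_commute_fixed[OF commute_R2] by (auto simp: g9_relations)
    show "endo_apply plane (endo_apply plane v) = v" "endo_apply (g 9) (endo_apply (g 9) v) = 1 *\<^sub>R v"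
      "endo_apply (g 9) (endo_apply plane v) = - endo_apply plane (endo_apply (g 9) v)" for v
      by (simp_all add: plane_square g9_relations flip: endo_apply_mult)
  qed (simp_all add: subspace_fixed_space linear_endo_apply)
  then show ?thesis
    by (simp add: conj_commute)
qed

lemma dim_fixed_plane_R2:
  "dim {v. endo_apply plane v = v \<and> endo_apply R2 v = v}
    = 2 * dim {v. endo_apply plane v = v \<and> endo_apply R2 v = v \<and> endo_apply N v = 0}"
proof -
  let ?V = "{v. endo_apply plane v = v \<and> endo_apply R2 v = v}"
  have invariant: "endo_apply a ` ?V \<subseteq> ?V"
    if "a * plane = plane * a" "a * J1 = J1 * a" "a * J2 = J2 * a" "a * J3 = J3 * a" "a * J4 = J4 * a"
    for a
    using endo_apply_commute_fixed[OF that(1)] endo_apply_commute_fixed[OF commute_R2[OF that(2-5)]]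
    by auto
  have "2 * dim {v \<in> ?V. endo_apply K v = v} = dim ?V"
  proof (rule dim_fixed_space_half[where A = "endo_apply gamma_012" and c = 1])
    show "subspace ?V"
      by (simp add: subspace_def)
    show "endo_apply K ` ?V \<subseteq> ?V" "endo_apply gamma_012 ` ?V \<subseteq> ?V"
      by (rule invariant; simp add: K_relations gamma_012_relations)+
    show "endo_apply K (endo_apply K v) = v" "endo_apply gamma_012 (endo_apply gamma_012 v) = 1 *\<^sub>R v"
      "endo_apply gamma_012 (endo_apply K v) = - endo_apply K (endo_apply gamma_012 v)" for v
      by (simp_all add: K_relations gamma_012_relations flip: endo_apply_mult)
  qed (simp_all add: linear_endo_apply)
  then show ?thesis
    by (simp add: kernel_N_iff conj_assoc)
qed

end

theorem mainTheorem3: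
  fixes G :: "nat \<Rightarrow> real^'n^'n"
    and \<theta>1 \<theta>2 \<theta>3 \<theta>4 \<alpha> \<beta> :: real
    and L R2 N P :: "real^'n^'n"
  assumes dim32: "CARD('n) = 32"
    and rep: "clifford_rep G"
    and ab: "\<alpha>^2 = \<beta>^2" and a0: "\<alpha> \<noteq> 0"
    and L_def: "L = mexp ((\<theta>1/2) *\<^sub>R (G 1 ** G 2) + (\<theta>2/2) *\<^sub>R (G 3 ** G 4)
                 + (\<theta>3/2) *\<^sub>R (G 5 ** G 6) + (\<theta>4/2) *\<^sub>R (G 7 ** G 8)
                 + (\<alpha>/2) *\<^sub>R (G 0 ** G 10) + (\<beta>/2) *\<^sub>R (G 9 ** G 10))"
    and R2_def: "R2 = (cos \<theta>1 *\<^sub>R mat 1 + sin \<theta>1 *\<^sub>R (G 1 ** G 2))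
                   ** (cos \<theta>2 *\<^sub>R mat 1 + sin \<theta>2 *\<^sub>R (G 3 ** G 4))
                   ** (cos \<theta>3 *\<^sub>R mat 1 + sin \<theta>3 *\<^sub>R (G 5 ** G 6))
                   ** (cos \<theta>4 *\<^sub>R mat 1 + sin \<theta>4 *\<^sub>R (G 7 ** G 8))"
    and N_def: "N = \<alpha> *\<^sub>R (G 0 ** G 10) + \<beta> *\<^sub>R (G 9 ** G 10)"
    and P_def: "P = G 0 ** G 1 ** G 3 ** G 5 ** G 7 ** G 9"
  shows
    "(N ** N = 0 \<and> L ** L = R2 ** (mat 1 + N) \<and> dim {v :: real^'n. N *v v = 0} = 16)
     \<and> (\<forall>\<epsilon> :: real^'n. (P *v \<epsilon> = \<epsilon> \<and> (L ** P ** matrix_inv L) *v \<epsilon> = \<epsilon>)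
            \<longleftrightarrow> (P *v \<epsilon> = \<epsilon> \<and> R2 *v \<epsilon> = \<epsilon> \<and> N *v \<epsilon> = 0))
     \<and> (4 dvd dim {\<epsilon> :: real^'n. R2 *v \<epsilon> = \<epsilon>}
        \<and> real (dim {\<epsilon> :: real^'n. P *v \<epsilon> = \<epsilon> \<and> R2 *v \<epsilon> = \<epsilon> \<and> N *v \<epsilon> = 0})
            = real (dim {\<epsilon> :: real^'n. R2 *v \<epsilon> = \<epsilon>}) / 4
        \<and> real (dim {\<epsilon> :: real^'n. R2 *v \<epsilon> = \<epsilon>}) / 4
            = real (dim {\<epsilon> :: real^'n. P *v \<epsilon> = \<epsilon> \<and> R2 *v \<epsilon> = \<epsilon>}) / 2)"
proof -
  interpret s: spin_lift_rep "\<lambda>i. endo_of_matrix (G i)" \<theta>1 \<theta>2 \<theta>3 \<theta>4 \<alpha> \<beta>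
    using clifford_rep_generators[OF rep] ab a0
    by (simp add: spin_lift_rep_def spin_lift_def spin_lift_axioms_def)
  have L: "endo_of_matrix L = s.L" and R2: "endo_of_matrix R2 = s.R2"
    and N: "endo_of_matrix N = s.N" and P: "endo_of_matrix P = s.plane"
    by (simp_all add: L_def R2_def N_def P_def s.L_def s.X_def s.R2_def s.N_def s.word_defs
        endo_of_matrix_mexp endo_of_matrix_simps)
  have "matrix_inv L = matrix_of_endo (exp (- s.X))"
    by (intro matrix_inv_eqI; simp flip: endo_of_matrix_inject
        add: endo_of_matrix_simps L s.L_inverse)
  then have L_inv: "endo_of_matrix (matrix_inv L) = exp (- s.X)"
    by simp
  have action: "A *v v = endo_apply (endo_of_matrix A) v" for A :: "real^'n^'n" and v
    by simp
  show ?thesis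
    unfolding action endo_of_matrix_mult L R2 N P L_inv
    using s.N_square s.L_square s.dim_kernel_N s.fixed_by_conj_plane_iff s.dim_fixed_R2
      s.dim_fixed_plane_R2 dim32
    by (simp add: endo_of_matrix_inject[symmetric] endo_of_matrix_simps L R2 N)
qed

end
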